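(* For each prime number $p>2$, there exists a self-similar $p$-adic fractal string $\mathcal{CS}_p\subseteq\mathbb{Z}_p$ of Minkowski--Bouligand dimension $D=\frac{\log(\frac{1+p}{2})}{\log p}$ and with oscillatory period $\mathbf{p}=\frac{2\pi}{\log p}$; that is, its geometric zeta function extends meromorphically to $\mathbb{C}$, its set of poles (complex dimensions) is exactly $\{D+\frac{2\pi i n}{\log p}: n\in\mathbb{Z}\}$, and $D$ is the abscissa of convergence of the series defining the geometric zeta function.
   Context: Let $p$ be a prime and $\mathbb{Z}_p$ the ring of $p$-adic integers with $|p|_p=p^{-1}$. A $p$-adic fractal string $\mathcal{L}$ in $\mathbb{Z}_p$ is a countable disjoint union of balls $a+p^n\mathbb{Z}_p$ ($a\in\mathbb{Z}_p$, $n\ge1$) contained in $\mathbb{Z}_p$; such a ball has length $p^{-n}$, and $\mathcal{L}$ is encoded by its sequence of lengths $l_j$ counted with multiplicity. Its geometric zeta function is $\zeta_{\mathcal{L}}(s)=\sum_j l_j^s$ for $\Re(s)$ large, meromorphically continued to $\mathbb{C}$ when possible; the complex dimensions are the poles of this continuation; the Minkowski--Bouligand dimension $D$ is the abscissa of convergence of $\sum_j l_j^s$; the oscillatory period is $\mathbf{p}>0$ if the set of complex dimensions is exactly $\{D+in\mathbf{p}:n\in\mathbb{Z}\}$. $\mathcal{L}$ is self-similar if it is the complement in $\mathbb{Z}_p$ of the unique nonempty compact set $K\subseteq\mathbb{Z}_p$ satisfying $K=\bigcup_i\phi_i(K)$ for a finite family of at least two similarity contractions $\phi_i(x)=c_i+p^{m}x$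 of $\mathbb{Z}_p$ into itself ($c_i\in\mathbb{Z}$, $m\ge1$). *)

theory Defs
  imports "HOL-Complex_Analysis.Complex_Analysis"
begin

(* p-adic integers as the inverse limit of Z/p^n Z: a p-adic integer x is the
   compatible sequence of its residues x n in {0..p^n-1}.  As a subset of
   nat => int it carries the product (of discrete spaces) topology, which is
   exactly the p-adic topology. *)
definition Zp :: "nat \<Rightarrow> (nat \<Rightarrow> int) set" where
  "Zp p = {x. \<forall>n. 0 \<le> x n \<and> x n < int p ^ n \<and> x (Suc n) mod (int p ^ n) = x n}"

definition zp_of_int :: "nat \<Rightarrow> int \<Rightarrow> (nat \<Rightarrow> int)" where
  "zp_of_int p c = (\<lambda>n. c mod (int p ^ n))"

definition zp_add :: "nat \<Rightarrow> (nat \<Rightarrow> int) \<Rightarrow> (nat \<Rightarrow> int) \<Rightarrow> (nat \<Rightarrow> int)" where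
  "zp_add p x y = (\<lambda>n. (x n + y n) mod (int p ^ n))"

definition zp_mult :: "nat \<Rightarrow> (nat \<Rightarrow> int) \<Rightarrow> (nat \<Rightarrow> int) \<Rightarrow> (nat \<Rightarrow> int)" where
  "zp_mult p x y = (\<lambda>n. (x n * y n) mod (int p ^ n))"

(* the ball a + p^n Z_p (for a in Z_p): those x with x = a mod p^n *)
definition zp_ball :: "nat \<Rightarrow> (nat \<Rightarrow> int) \<Rightarrow> nat \<Rightarrow> (nat \<Rightarrow> int) set" where
  "zp_ball p a n = {x \<in> Zp p. x n = a n}"

definition zp_sim :: "nat \<Rightarrow> int \<Rightarrow> nat \<Rightarrow> (nat \<Rightarrow> int) \<Rightarrow> (nat \<Rightarrow> int)" where
  "zp_sim p c m x = zp_add p (zp_of_int p c) (zp_mult p (zp_of_int p (int p ^ m)) x)"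

definition zp_invariant_set :: "nat \<Rightarrow> nat \<Rightarrow> int set \<Rightarrow> (nat \<Rightarrow> int) set \<Rightarrow> bool" where
  "zp_invariant_set p m C K \<longleftrightarrow>
     K \<subseteq> Zp p \<and> K \<noteq> {} \<and> compact K \<and> K = (\<Union>c\<in>C. zp_sim p c m ` K)"

definition self_similar_padic_string :: "nat \<Rightarrow> (nat \<Rightarrow> int) set \<Rightarrow> bool" where
  "self_similar_padic_string p L \<longleftrightarrow>
     (\<exists>m C K. m \<ge> 1 \<and> card C \<ge> 2 \<and> zp_invariant_set p m C K \<and>
        (\<forall>K'. zp_invariant_set p m C K' \<longrightarrow> K' = K) \<and> L = Zp p - K)"

(* number of balls of length p^(-n) (n \<ge> 1) in the canonical decomposition of the
   (open) string L into maximal balls: balls a + p^n Z_p contained in L whose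
   parent ball a + p^(n-1) Z_p is not contained in L *)
definition string_count :: "nat \<Rightarrow> (nat \<Rightarrow> int) set \<Rightarrow> nat \<Rightarrow> nat" where
  "string_count p L n = card {B. \<exists>a\<in>Zp p. B = zp_ball p a n \<and> B \<subseteq> L \<and>
                                   \<not> zp_ball p a (n - 1) \<subseteq> L}"

(* the terms of the geometric zeta function  sum_j l_j^s, grouped by length p^(-n) *)
definition geom_zeta_term :: "nat \<Rightarrow> (nat \<Rightarrow> int) set \<Rightarrow> complex \<Rightarrow> nat \<Rightarrow> complex" where
  "geom_zeta_term p L s n =
     (if n = 0 then 0
      else of_nat (string_count p L n) * (complex_of_real (1 / real p ^ n)) powr s)"

end

(*
  Let k = (p + 1) / 2 and let K be the set of p-adic integers all of whose digits are smaller
  than k.  K is compact and is the attractor of the k similarities x |-> c + p x (0 <= c < k),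
  so its complement is a self-similar p-adic fractal string.  A maximal ball of length
  p^-(n+1) in the complement is fixed by n admissible digits followed by one of the p - k
  forbidden ones, so there are k^n (p - k) of them.  Hence the geometric zeta function is
  sum_n k^n (p - k) p^-(n+1)s = (p - k) / (p^s - k): the series converges absolutely exactly
  for Re s > log k / log p = D, and the poles of the continuation are the solutions of p^s = k,
  namely D + 2 pi i n / log p.
*)
theory Submission
  imports Defs
begin

section \<open>Digit expansions\<close>

lemma zdiv_less_iff_less_mult:
  fixes m n q :: int
  assumes "q > 0"
  shows "m div q < n \<longleftrightarrow> m < n * q"
proof
  assume "m div q < n"
  then have "q * (m div q) + q \<le> n * q"
    using assms mult_left_mono[of "m div q + 1" n q] by (simp add: algebra_simps)
  then show "m < n * q"
    using pos_mod_bound[OF assms, of m] mult_div_mod_eq[of q m] by linarith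
next
  assume "m < n * q"
  then have "m div q \<le> (q - 1 + q * (n - 1)) div q"
    using assms by (intro zdiv_mono1) (auto simp: algebra_simps)
  also have "\<dots> = n - 1"
    using assms by simp
  finally show "m div q < n" by simp
qed

definition digits_below :: "int \<Rightarrow> int \<Rightarrow> nat \<Rightarrow> int \<Rightarrow> bool" where
  "digits_below P k n v \<longleftrightarrow> v \<in> {0..<P ^ n} \<and> (\<forall>j<n. v div P ^ j mod P < k)"

lemma digit_mod_power:
  fixes P v :: int
  assumes "P > 0" "j < m"
  shows "v mod P ^ m div P ^ j mod P = v div P ^ j mod P"
proof -
  have power_split: "P ^ m = P ^ j * P ^ (m - j)"
    using assms(2) by (simp flip: power_add)
  have "v mod P ^ m = P ^ j * (v div P ^ j mod P ^ (m - j)) + v mod P ^ j"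
    unfolding power_split using assms(1) by (intro zmod_zmult2_eq) simp
  then have "v mod P ^ m div P ^ j = v div P ^ j mod P ^ (m - j)"
    using assms(1) by simp
  moreover have "P dvd P ^ (m - j)"
    using assms(2) by simp
  ultimately show ?thesis
    by (simp add: mod_mod_cancel)
qed

lemma digits_below_mod_power:
  fixes P k v :: int
  assumes "P > 1" "k > 0" "digits_below P k n v"
  shows "digits_below P k m (v mod P ^ m)"
proof (cases "m \<le> n")
  case True
  then show ?thesis
    using assms digit_mod_power[of P _ m v] by (auto simp: digits_below_def)
next
  case False
  then have "P ^ n \<le> P ^ m"
    using assms(1) by (intro power_increasing) auto
  then have v: "v mod P ^ m = v" "v < P ^ m"
    using assms(3) by (auto simp: digits_below_def)
  have "v div P ^ j mod P < k" if "j < m" for j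
  proof (cases "j < n")
    case True
    then show ?thesis using assms(3) by (auto simp: digits_below_def)
  next
    case False
    then have "P ^ n \<le> P ^ j"
      using assms(1) by (intro power_increasing) auto
    then have "v div P ^ j = 0"
      using assms(3) by (auto simp: digits_below_def intro: div_pos_pos_trivial)
    then show ?thesis using assms(2) by simp
  qed
  then show ?thesis
    using v assms(3) by (auto simp: digits_below_def)
qed

lemma bottom_digit_in_range:
  fixes P c t :: int
  assumes "P > 1" "c \<in> {0..<P}"
  shows "c + P * t \<in> {0..<P ^ Suc n} \<longleftrightarrow> t \<in> {0..<P ^ n}"
proof -
  have div: "(c + P * t) div P = t"
    using assms by auto
  have "0 \<le> c + P * t \<longleftrightarrow> 0 \<le> t"
    using assms pos_imp_zdiv_nonneg_iff[of P "c + P * t"] by (simp add: div)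
  moreover have "c + P * t < P ^ n * P \<longleftrightarrow> t < P ^ n"
    using assms zdiv_less_iff_less_mult[of P "c + P * t" "P ^ n"] by (simp add: div)
  ultimately show ?thesis
    by (simp add: mult.commute)
qed

lemma digits_below_Suc_bottom:
  fixes P k c t :: int
  assumes "P > 1" "c \<in> {0..<P}"
  shows "digits_below P k (Suc n) (c + P * t) \<longleftrightarrow> c < k \<and> digits_below P k n t"
proof -
  have "(c + P * t) div P ^ Suc j = t div P ^ j" for j
    using assms by (simp add: zdiv_zmult2_eq)
  moreover have "(c + P * t) mod P = c"
    using assms by simp
  ultimately show ?thesis
    unfolding digits_below_def bottom_digit_in_range[OF assms]
    by (auto simp: less_Suc_eq_0_disj)
qed

lemma digits_below_Suc_top:
  fixes P k v :: int
  assumes "P > 1" "v \<in> {0..<P ^ Suc n}"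
  shows "digits_below P k (Suc n) v \<longleftrightarrow> digits_below P k n (v mod P ^ n) \<and> v div P ^ n < k"
proof -
  have "v div P ^ n < P"
    using assms zdiv_less_iff_less_mult[of "P ^ n" v P] by (simp add: mult.commute)
  then have "v div P ^ n mod P = v div P ^ n"
    using assms by (simp add: pos_imp_zdiv_nonneg_iff)
  then show ?thesis
    using assms digit_mod_power[of P _ n v] by (auto simp: digits_below_def less_Suc_eq)
qed

lemma place_value_image:
  fixes P Q :: int
  assumes "Q > 0" "U \<subseteq> {0..<Q}" "D \<subseteq> {0..<P}"
  shows "{v \<in> {0..<P * Q}. v mod Q \<in> U \<and> v div Q \<in> D} = (\<lambda>(u, d). u + Q * d) ` (U \<times> D)"
proof (intro equalityI subsetI)
  fix v assume "v \<in> {v \<in> {0..<P * Q}. v mod Q \<in> U \<and> v div Q \<in> D}"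
  moreover have "v = v mod Q + Q * (v div Q)" by simp
  ultimately show "v \<in> (\<lambda>(u, d). u + Q * d) ` (U \<times> D)"
    by (intro image_eqI[of _ _ "(v mod Q, v div Q)"]) auto
next
  fix v assume "v \<in> (\<lambda>(u, d). u + Q * d) ` (U \<times> D)"
  then obtain u d where "u \<in> U" "d \<in> D" and v: "v = u + Q * d" by auto
  then have u: "u \<in> {0..<Q}" and d: "d \<in> {0..<P}" using assms by auto
  then have "v mod Q = u" "v div Q = d" unfolding v by auto
  moreover have "v < P * Q"
    using u d assms(1) mult_right_mono[of "d + 1" P Q] unfolding v by (simp add: algebra_simps)
  ultimately show "v \<in> {v \<in> {0..<P * Q}. v mod Q \<in> U \<and> v div Q \<in> D}"
    using \<open>u \<in> U\<close> \<open>d \<in> D\<close> u d assms(1) by (simp add: v)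
qed

lemma card_place_value:
  fixes P Q :: int
  assumes "Q > 0" "U \<subseteq> {0..<Q}" "D \<subseteq> {0..<P}"
  shows "card {v \<in> {0..<P * Q}. v mod Q \<in> U \<and> v div Q \<in> D} = card U * card D"
proof -
  have "inj_on (\<lambda>(u, d). u + Q * d) (U \<times> D)"
    by (rule inj_on_inverseI[where g = "\<lambda>v. (v mod Q, v div Q)"]) (use assms in auto)
  then show ?thesis
    unfolding place_value_image[OF assms] by (simp add: card_image card_cartesian_product)
qed

lemma digits_below_Suc_eq_place_value:
  fixes P k :: int
  assumes "P > 1" "0 \<le> k"
  shows "{v. digits_below P k (Suc n) v}
    = {v \<in> {0..<P ^ Suc n}. v mod P ^ n \<in> {v. digits_below P k n v} \<and> v div P ^ n \<in> {0..<k}}"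
proof -
  have "digits_below P k (Suc n) v \<longleftrightarrow>
      v \<in> {0..<P ^ Suc n} \<and> digits_below P k n (v mod P ^ n) \<and> v div P ^ n \<in> {0..<k}" for v
  proof (cases "v \<in> {0..<P ^ Suc n}")
    case True
    then show ?thesis
      using assms digits_below_Suc_top[of P v n k] by (simp add: pos_imp_zdiv_nonneg_iff)
  next
    case False
    then show ?thesis by (auto simp: digits_below_def)
  qed
  then show ?thesis by blast
qed

lemma card_digits_below:
  fixes P k :: int
  assumes "P > 1" "0 \<le> k" "k \<le> P"
  shows "card {v. digits_below P k n v} = nat k ^ n"
proof (induction n)
  case 0
  have "{v. digits_below P k 0 v} = {0}" by (auto simp: digits_below_def)
  then show ?case by simp
next
  case (Suc n)
  have "{v. digits_below P k n v} \<subseteq> {0..<P ^ n}" "{0..<k} \<subseteq> {0..<P}"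
    using assms by (auto simp: digits_below_def)
  then show ?case
    unfolding digits_below_Suc_eq_place_value[OF assms(1,2)] power_Suc
    using Suc assms by (subst card_place_value) auto
qed

lemma card_digits_below_exit:
  fixes P k :: int
  assumes "P > 1" "0 \<le> k" "k \<le> P"
  shows "card {v \<in> {0..<P ^ Suc n}. digits_below P k n (v mod P ^ n) \<and> \<not> digits_below P k (Suc n) v}
    = nat k ^ n * nat (P - k)"
proof -
  have "v \<in> {0..<P ^ Suc n} \<and> digits_below P k n (v mod P ^ n) \<and> \<not> digits_below P k (Suc n) v \<longleftrightarrow>
      v \<in> {0..<P ^ Suc n} \<and> digits_below P k n (v mod P ^ n) \<and> v div P ^ n \<in> {k..<P}" for v
  proof (cases "v \<in> {0..<P ^ Suc n}")
    case True
    then have "v div P ^ n < P"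
      using assms zdiv_less_iff_less_mult[of "P ^ n" v P] by (simp add: mult.commute)
    then show ?thesis
      using True assms digits_below_Suc_top[of P v n k] by auto
  next
    case False
    then show ?thesis by auto
  qed
  then have "card {v \<in> {0..<P ^ Suc n}. digits_below P k n (v mod P ^ n) \<and> \<not> digits_below P k (Suc n) v}
    = card {v \<in> {0..<P * P ^ n}. v mod P ^ n \<in> {v. digits_below P k n v} \<and> v div P ^ n \<in> {k..<P}}"
    by (intro arg_cong[where f = card]) auto
  also have "\<dots> = card {v. digits_below P k n v} * card {k..<P}"
    by (rule card_place_value) (use assms in \<open>auto simp: digits_below_def\<close>)
  also have "\<dots> = nat k ^ n * nat (P - k)"
    using assms by (simp add: card_digits_below)
  finally show ?thesis .
qed

section \<open>Similarities of the p-adic integers\<close>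

lemma Zp_in_range:
  assumes "x \<in> Zp p"
  shows "x n \<in> {0..<int p ^ n}"
  using assms by (simp add: Zp_def)

lemma Zp_0:
  assumes "x \<in> Zp p"
  shows "x 0 = 0"
  using Zp_in_range[OF assms, of 0] by simp

lemma Zp_mod_power:
  assumes "x \<in> Zp p" "m \<le> n"
  shows "x n mod int p ^ m = x m"
  using assms(2)
proof (induction n)
  case 0
  then show ?case using Zp_in_range[OF assms(1), of 0] by simp
next
  case (Suc n)
  show ?case
  proof (cases "m = Suc n")
    case True
    then show ?thesis using Zp_in_range[OF assms(1), of "Suc n"] by simp
  next
    case False
    then have "m \<le> n" using Suc.prems by simp
    then have "x (Suc n) mod int p ^ m = x (Suc n) mod int p ^ n mod int p ^ m"
      by (simp add: mod_mod_cancel le_imp_power_dvd)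
    also have "\<dots> = x m"
      using assms(1) Suc.IH \<open>m \<le> n\<close> by (simp add: Zp_def)
    finally show ?thesis .
  qed
qed

lemma zp_of_int_in_Zp:
  assumes "p > 0"
  shows "zp_of_int p v \<in> Zp p"
  using assms unfolding Zp_def zp_of_int_def by (auto simp: mod_mod_cancel le_imp_power_dvd)

lemma zp_of_int_eq:
  assumes "v \<in> {0..<int p ^ n}"
  shows "zp_of_int p v n = v"
  using assms by (simp add: zp_of_int_def)

(* Simp rewrites the literal 1 :: nat to Suc 0, so the equations for zp_sim p c 1 below are
   applied by unfolding rather than as simp rules. *)
lemma zp_sim_1_eq: "zp_sim p c 1 y n = (c + int p * y n) mod int p ^ n"
  unfolding zp_sim_def zp_add_def zp_mult_def zp_of_int_def
  by (simp add: mod_add_eq mod_mult_left_eq)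

lemma Zp_shift_mod_power:
  assumes "y \<in> Zp p" "p > 1" "c \<in> {0..<int p}" "m \<le> n"
  shows "(c + int p * y n) mod int p ^ Suc m = c + int p * y m"
proof -
  define q where "q = y n div int p ^ m"
  have "y n = y m + int p ^ m * q"
    using Zp_mod_power[OF assms(1,4)] unfolding q_def by (metis add.commute mult_div_mod_eq)
  then have "c + int p * y n = (c + int p * y m) + int p ^ Suc m * q"
    by (simp add: algebra_simps)
  then have "(c + int p * y n) mod int p ^ Suc m = (c + int p * y m) mod int p ^ Suc m"
    by (simp only: mod_mult_self2)
  also have "\<dots> = c + int p * y m"
    using assms Zp_in_range[OF assms(1)] bottom_digit_in_range[of "int p" c "y m" m] by simp
  finally show ?thesis .
qed

lemma zp_sim_1_Suc:
  assumes "y \<in> Zp p" "p > 1" "c \<in> {0..<int p}"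
  shows "zp_sim p c 1 y (Suc n) = c + int p * y n"
  unfolding zp_sim_1_eq using Zp_shift_mod_power[OF assms, of n "Suc n"] by simp

lemma zp_sim_1_in_Zp:
  assumes "y \<in> Zp p" "p > 1" "c \<in> {0..<int p}"
  shows "zp_sim p c 1 y \<in> Zp p"
proof -
  have "zp_sim p c 1 y n \<in> {0..<int p ^ n}" for n
    unfolding zp_sim_1_eq using assms by simp
  moreover have "zp_sim p c 1 y (Suc n) mod int p ^ n = zp_sim p c 1 y n" for n
  proof (cases n)
    case (Suc m)
    then show ?thesis
      unfolding Suc zp_sim_1_Suc[OF assms] using Zp_shift_mod_power[OF assms, of m "Suc m"] by simp
  qed (unfold zp_sim_1_eq, simp)
  ultimately show ?thesis
    by (simp add: Zp_def)
qed

lemma zp_invariant_setD: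
  assumes "zp_invariant_set p m C K"
  shows "K \<subseteq> Zp p" and "K \<noteq> {}" and "compact K"
  using assms unfolding zp_invariant_set_def by blast+

lemma zp_invariant_set_closed_under:
  assumes "zp_invariant_set p m C K" "c \<in> C" "y \<in> K"
  shows "zp_sim p c m y \<in> K"
proof -
  have "K = (\<Union>c\<in>C. zp_sim p c m ` K)"
    using assms(1) unfolding zp_invariant_set_def by (elim conjE)
  moreover have "zp_sim p c m y \<in> (\<Union>c\<in>C. zp_sim p c m ` K)"
    using assms(2,3) by blast
  ultimately show ?thesis
    by (rule ssubst)
qed

lemma zp_invariant_set_cover:
  assumes "zp_invariant_set p m C K" "x \<in> K"
  obtains c y where "c \<in> C" "y \<in> K" "x = zp_sim p c m y"
proof -
  have "K = (\<Union>c\<in>C. zp_sim p c m ` K)"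
    using assms(1) unfolding zp_invariant_set_def by (elim conjE)
  then have "x \<in> (\<Union>c\<in>C. zp_sim p c m ` K)"
    using assms(2) by (rule subst)
  then show ?thesis
    using that by blast
qed

section \<open>The attractor of the digit maps\<close>

(* Function spaces have no t2_space instance, so Hausdorffness of nat => int is obtained
   through the product topology. *)
lemma Hausdorff_space_euclidean_t2: "Hausdorff_space (euclidean :: 'a::t2_space topology)"
  unfolding Hausdorff_space_def by (metis disjnt_def hausdorff open_openin)

lemma Hausdorff_space_fun: "Hausdorff_space (euclidean :: ('a \<Rightarrow> 'b::t2_space) topology)"
  by (metis Hausdorff_space_euclidean_t2 Hausdorff_space_product_topology euclidean_product_topology)

lemma compact_imp_closed_fun:
  fixes S :: "('a \<Rightarrow> 'b::t2_space) set"
  assumes "compact S"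
  shows "closed S"
  using assms Hausdorff_space_fun compactin_imp_closedin
  by (metis closed_closedin compactin_euclidean_iff)

lemma tendsto_fun_coordinatewise:
  fixes f :: "'c \<Rightarrow> 'a \<Rightarrow> 'b::topological_space"
  assumes "\<And>i. ((\<lambda>n. f n i) \<longlongrightarrow> l i) F"
  shows "(f \<longlongrightarrow> l) F"
proof -
  have "limitin (product_topology (\<lambda>i. euclidean) UNIV) f l F"
    unfolding limitin_componentwise using assms by simp
  then show ?thesis
    unfolding euclidean_product_topology by simp
qed

definition Zp_digits_below :: "nat \<Rightarrow> nat \<Rightarrow> (nat \<Rightarrow> int) set" where
  "Zp_digits_below p k = {x \<in> Zp p. \<forall>n. digits_below (int p) (int k) n (x n)}"

lemma zp_sim_1_in_Zp_digits_below:
  assumes "p > 1" "k \<le> p" "y \<in> Zp_digits_below p k" "c \<in> {0..<int k}"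
  shows "zp_sim p c 1 y \<in> Zp_digits_below p k"
proof -
  have y: "y \<in> Zp p" "\<And>n. digits_below (int p) (int k) n (y n)"
    using assms(3) by (auto simp: Zp_digits_below_def)
  have c: "c \<in> {0..<int p}"
    using assms(2,4) by auto
  have x: "zp_sim p c 1 y \<in> Zp p"
    using zp_sim_1_in_Zp[OF y(1) assms(1) c] .
  have "digits_below (int p) (int k) n (zp_sim p c 1 y n)" for n
  proof (cases n)
    case 0
    then show ?thesis using Zp_0[OF x] by (simp add: digits_below_def)
  next
    case (Suc m)
    then show ?thesis
      unfolding Suc zp_sim_1_Suc[OF y(1) assms(1) c]
      using assms(1,4) c y(2)[of m] by (simp add: digits_below_Suc_bottom)
  qed
  then show ?thesis
    using x by (simp add: Zp_digits_below_def)
qed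

lemma Zp_digits_below_decompose:
  assumes "p > 1" "x \<in> Zp_digits_below p k"
  obtains c y where "c \<in> {0..<int k}" "y \<in> Zp_digits_below p k" "x = zp_sim p c 1 y"
proof -
  have x: "x \<in> Zp p" "\<And>n. digits_below (int p) (int k) n (x n)"
    using assms(2) by (auto simp: Zp_digits_below_def)
  define c where "c = x 1"
  define y where "y n = x (Suc n) div int p" for n
  have x_Suc: "x (Suc n) = c + int p * y n" for n
    using Zp_mod_power[OF x(1), of 1 "Suc n"] mult_div_mod_eq[of "int p" "x (Suc n)"]
    unfolding c_def y_def by simp
  have c: "c \<in> {0..<int p}"
    using Zp_in_range[OF x(1), of 1] by (simp add: c_def)
  have y_digits: "digits_below (int p) (int k) n (y n)" and "c < int k" for n
    using x(2)[of "Suc n"] assms(1) c by (simp_all add: x_Suc digits_below_Suc_bottom)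
  have "y (Suc n) mod int p ^ n = y n" for n
  proof -
    have "x (Suc n) = x (Suc (Suc n)) mod (int p * int p ^ n)"
      using Zp_mod_power[OF x(1), of "Suc n" "Suc (Suc n)"] by simp
    also have "\<dots> = c + int p * (y (Suc n) mod int p ^ n)"
      using c by (simp add: zmod_zmult2_eq x_Suc)
    finally show ?thesis
      using c by (simp add: x_Suc)
  qed
  then have y: "y \<in> Zp_digits_below p k"
    using y_digits by (auto simp: Zp_digits_below_def Zp_def digits_below_def)
  then have "y \<in> Zp p"
    by (simp add: Zp_digits_below_def)
  have "x = zp_sim p c 1 y"
  proof
    fix n
    show "x n = zp_sim p c 1 y n"
    proof (cases n)
      case 0
      then show ?thesis
        unfolding zp_sim_1_eq using Zp_0[OF x(1)] by simp
    next
      case (Suc m)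
      show ?thesis
        unfolding Suc zp_sim_1_Suc[OF \<open>y \<in> Zp p\<close> assms(1) c] x_Suc ..
    qed
  qed
  then show ?thesis
    using c \<open>c < int k\<close> y by (intro that) auto
qed

lemma Zp_digits_below_self_similar:
  assumes "p > 1" "k \<le> p"
  shows "Zp_digits_below p k = (\<Union>c\<in>{0..<int k}. zp_sim p c 1 ` Zp_digits_below p k)"
proof (intro equalityI subsetI)
  fix x assume "x \<in> (\<Union>c\<in>{0..<int k}. zp_sim p c 1 ` Zp_digits_below p k)"
  then show "x \<in> Zp_digits_below p k"
    using zp_sim_1_in_Zp_digits_below[OF assms] by auto
next
  fix x assume "x \<in> Zp_digits_below p k"
  then obtain c y where "c \<in> {0..<int k}" "y \<in> Zp_digits_below p k" "x = zp_sim p c 1 y"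
    by (rule Zp_digits_below_decompose[OF assms(1)])
  then show "x \<in> (\<Union>c\<in>{0..<int k}. zp_sim p c 1 ` Zp_digits_below p k)"
    by blast
qed

lemma compact_Zp_digits_below:
  assumes "p > 1"
  shows "compact (Zp_digits_below p k)"
proof -
  have finite: "finite {v. digits_below (int p) (int k) n v}" for n
    by (rule finite_subset[of _ "{0..<int p ^ n}"]) (auto simp: digits_below_def)
  have "compactin (product_topology (\<lambda>n. euclidean) UNIV)
      (PiE UNIV (\<lambda>n. {v. digits_below (int p) (int k) n v}))"
    unfolding compactin_PiE using finite by (auto intro: finite_imp_compact)
  then have "compact (PiE UNIV (\<lambda>n. {v. digits_below (int p) (int k) n v}))"
    unfolding euclidean_product_topology by simp
  moreover have "closed {x :: nat \<Rightarrow> int. x (Suc n) mod int p ^ n = x n}" for n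
    by (intro closed_Collect_eq continuous_on_compose2[OF Topological_Spaces.continuous_on_discrete
        continuous_on_product_coordinates]) auto
  then have "closed (\<Inter>n. {x :: nat \<Rightarrow> int. x (Suc n) mod int p ^ n = x n})"
    by blast
  moreover have "Zp_digits_below p k = PiE UNIV (\<lambda>n. {v. digits_below (int p) (int k) n v})
      \<inter> (\<Inter>n. {x. x (Suc n) mod int p ^ n = x n})"
    by (auto simp: Zp_digits_below_def Zp_def digits_below_def)
  ultimately show ?thesis
    by auto
qed

lemma invariant_set_subset_Zp_digits_below:
  assumes "p > 1" "k \<le> p" "zp_invariant_set p 1 {0..<int k} K"
  shows "K \<subseteq> Zp_digits_below p k"
proof -
  note Zp = zp_invariant_setD(1)[OF assms(3)]
  have "\<forall>x\<in>K. digits_below (int p) (int k) n (x n)" for n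
  proof (induction n)
    case 0
    have "digits_below (int p) (int k) 0 (x 0)" if "x \<in> K" for x
    proof -
      have "x 0 = 0"
        using Zp Zp_0 that by blast
      then show ?thesis
        by (simp add: digits_below_def)
    qed
    then show ?case
      by blast
  next
    case (Suc n)
    show ?case
    proof
      fix x assume "x \<in> K"
      then obtain c y where c: "c \<in> {0..<int k}" and "y \<in> K" and x: "x = zp_sim p c 1 y"
        using zp_invariant_set_cover[OF assms(3)] by blast
      then have "y \<in> Zp p" "c \<in> {0..<int p}"
        using Zp assms(2) by auto
      then show "digits_below (int p) (int k) (Suc n) (x (Suc n))"
        unfolding x zp_sim_1_Suc[OF \<open>y \<in> Zp p\<close> assms(1) \<open>c \<in> {0..<int p}\<close>]
        using Suc.IH \<open>y \<in> K\<close> c assms(1) by (simp add: digits_below_Suc_bottom)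
    qed
  qed
  then show ?thesis
    using Zp by (auto simp: Zp_digits_below_def)
qed

lemma invariant_set_attains_digits_below:
  assumes "p > 1" "k \<le> p" "zp_invariant_set p 1 {0..<int k} K"
    and "digits_below (int p) (int k) n v"
  shows "\<exists>z\<in>K. z n = v"
  using assms(4)
proof (induction n arbitrary: v)
  case 0
  obtain z where "z \<in> K"
    using zp_invariant_setD(2)[OF assms(3)] by blast
  moreover have "z 0 = v"
    using Zp_0[of z p] \<open>z \<in> K\<close> zp_invariant_setD(1)[OF assms(3)] 0 by (auto simp: digits_below_def)
  ultimately show ?case
    by blast
next
  case (Suc n)
  define c where "c = v mod int p"
  have v: "c + int p * (v div int p) = v" and c: "c \<in> {0..<int p}"
    using assms(1) by (simp_all add: c_def)
  then have "c < int k" "digits_below (int p) (int k) n (v div int p)"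
    using Suc.prems assms(1) digits_below_Suc_bottom[OF _ c, of "int k" n "v div int p"] by (simp_all add: v)
  then obtain y where "y \<in> K" and y: "y n = v div int p"
    using Suc.IH by blast
  then have "zp_sim p c 1 y \<in> K" "y \<in> Zp p"
    using zp_invariant_set_closed_under[OF assms(3)] zp_invariant_setD(1)[OF assms(3)] c \<open>c < int k\<close>
    by auto
  moreover have "zp_sim p c 1 y (Suc n) = v"
    unfolding zp_sim_1_Suc[OF \<open>y \<in> Zp p\<close> assms(1) c] y by (rule v)
  ultimately show ?case
    by blast
qed

lemma Zp_digits_below_subset_invariant_set:
  assumes "p > 1" "k \<le> p" "zp_invariant_set p 1 {0..<int k} K"
  shows "Zp_digits_below p k \<subseteq> K"
proof
  fix x assume "x \<in> Zp_digits_below p k"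
  then have x: "x \<in> Zp p" "\<And>n. digits_below (int p) (int k) n (x n)"
    by (auto simp: Zp_digits_below_def)
  note Zp = zp_invariant_setD(1)[OF assms(3)]
  have "\<forall>n. \<exists>z. z \<in> K \<and> z n = x n"
    using invariant_set_attains_digits_below[OF assms x(2)] by blast
  then obtain z where z: "\<And>n. z n \<in> K" "\<And>n. z n n = x n"
    by metis
  have "z n i = x i" if "i \<le> n" for n i
  proof -
    have "z n \<in> Zp p"
      using z(1) Zp by blast
    then have "z n i = z n n mod int p ^ i"
      using Zp_mod_power[OF _ that] by simp
    also have "\<dots> = x i"
      using z(2) Zp_mod_power[OF x(1) that] by simp
    finally show ?thesis .
  qed
  then have "eventually (\<lambda>n. z n i = x i) sequentially" for i
    unfolding eventually_sequentially by blast
  then have "z \<longlonglongrightarrow> x"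
    by (intro tendsto_fun_coordinatewise tendsto_eventually)
  then show "x \<in> K"
    using compact_imp_closed_fun[OF zp_invariant_setD(3)[OF assms(3)]] z(1) closed_sequentially by blast
qed

lemma self_similar_padic_string_Zp_digits_below:
  assumes "p > 1" "2 \<le> k" "k \<le> p"
  shows "self_similar_padic_string p (Zp p - Zp_digits_below p k)"
  unfolding self_similar_padic_string_def
proof (intro exI conjI allI impI)
  have "(\<lambda>_. 0) \<in> Zp_digits_below p k"
    using assms by (simp add: Zp_digits_below_def Zp_def digits_below_def)
  then show "zp_invariant_set p 1 {0..<int k} (Zp_digits_below p k)"
    unfolding zp_invariant_set_def
    using compact_Zp_digits_below[OF assms(1)] Zp_digits_below_self_similar[OF assms(1,3)]
    by (auto simp: Zp_digits_below_def)
  show "2 \<le> card {0..<int k}"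
    using assms(2) by simp
  show "K = Zp_digits_below p k" if "zp_invariant_set p 1 {0..<int k} K" for K
    using invariant_set_subset_Zp_digits_below[OF assms(1,3) that]
      Zp_digits_below_subset_invariant_set[OF assms(1,3) that] by blast
qed auto

section \<open>Maximal balls of the complement\<close>

lemma zp_ball_subset_complement_iff:
  assumes "p > 1" "k > 0" "a \<in> Zp p"
  shows "zp_ball p a n \<subseteq> Zp p - Zp_digits_below p k \<longleftrightarrow> \<not> digits_below (int p) (int k) n (a n)"
proof
  assume sub: "zp_ball p a n \<subseteq> Zp p - Zp_digits_below p k"
  show "\<not> digits_below (int p) (int k) n (a n)"
  proof
    assume digits: "digits_below (int p) (int k) n (a n)"
    define z where "z = zp_of_int p (a n)"
    have "z \<in> Zp p"
      using assms(1) by (simp add: z_def zp_of_int_in_Zp)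
    moreover have "digits_below (int p) (int k) m (z m)" for m
      using digits_below_mod_power[OF _ _ digits] assms by (simp add: z_def zp_of_int_def)
    moreover have "z n = a n"
      using Zp_in_range[OF assms(3)] by (simp add: z_def zp_of_int_eq)
    ultimately show False
      using sub by (auto simp: zp_ball_def Zp_digits_below_def)
  qed
next
  assume "\<not> digits_below (int p) (int k) n (a n)"
  then show "zp_ball p a n \<subseteq> Zp p - Zp_digits_below p k"
    by (auto simp: zp_ball_def Zp_digits_below_def) metis
qed

lemma maximal_balls_complement_Zp_digits_below:
  assumes "p > 1" "k > 0"
  defines "L \<equiv> Zp p - Zp_digits_below p k"
  shows "{B. \<exists>a\<in>Zp p. B = zp_ball p a (Suc m) \<and> B \<subseteq> L \<and> \<not> zp_ball p a (Suc m - 1) \<subseteq> L}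
    = (\<lambda>v. zp_ball p (zp_of_int p v) (Suc m)) `
        {v \<in> {0..<int p ^ Suc m}. digits_below (int p) (int k) m (v mod int p ^ m)
           \<and> \<not> digits_below (int p) (int k) (Suc m) v}"
    (is "?S = ?f ` ?T")
proof (intro equalityI subsetI)
  fix B assume "B \<in> ?S"
  then obtain a where a: "a \<in> Zp p" "B = zp_ball p a (Suc m)" "B \<subseteq> L" "\<not> zp_ball p a m \<subseteq> L"
    by auto
  have "a (Suc m) \<in> ?T"
    using a zp_ball_subset_complement_iff[OF assms(1,2) a(1)] Zp_in_range[OF a(1), of "Suc m"]
      Zp_mod_power[OF a(1), of m "Suc m"] unfolding L_def by auto
  moreover have "zp_of_int p (a (Suc m)) (Suc m) = a (Suc m)"
    using Zp_in_range[OF a(1)] by (rule zp_of_int_eq)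
  then have "B = ?f (a (Suc m))"
    by (auto simp: a(2) zp_ball_def)
  ultimately show "B \<in> ?f ` ?T"
    by blast
next
  fix B assume "B \<in> ?f ` ?T"
  then obtain v where v: "v \<in> ?T" and B: "B = ?f v"
    by blast
  define a where "a = zp_of_int p v"
  have "a \<in> Zp p"
    using assms(1) by (simp add: a_def zp_of_int_in_Zp)
  moreover have "a (Suc m) = v" "a m = v mod int p ^ m"
    using v by (simp_all add: a_def zp_of_int_def)
  ultimately show "B \<in> ?S"
    using v zp_ball_subset_complement_iff[OF assms(1,2)] unfolding B L_def a_def[symmetric] by auto
qed

lemma string_count_complement_Zp_digits_below:
  assumes "p > 1" "0 < k" "k \<le> p"
  shows "string_count p (Zp p - Zp_digits_below p k) (Suc m) = k ^ m * (p - k)"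
proof -
  let ?T = "{v \<in> {0..<int p ^ Suc m}. digits_below (int p) (int k) m (v mod int p ^ m)
    \<and> \<not> digits_below (int p) (int k) (Suc m) v}"
  have "inj_on (\<lambda>v. zp_ball p (zp_of_int p v) (Suc m)) ?T"
  proof (rule inj_onI)
    fix v w assume "v \<in> ?T" "w \<in> ?T"
      and eq: "zp_ball p (zp_of_int p v) (Suc m) = zp_ball p (zp_of_int p w) (Suc m)"
    have "zp_of_int p v \<in> zp_ball p (zp_of_int p v) (Suc m)"
      using assms(1) by (simp add: zp_ball_def zp_of_int_in_Zp)
    then have "zp_of_int p v (Suc m) = zp_of_int p w (Suc m)"
      unfolding eq by (simp add: zp_ball_def)
    then show "v = w"
      using \<open>v \<in> ?T\<close> \<open>w \<in> ?T\<close> by (simp add: zp_of_int_eq)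
  qed
  then have "string_count p (Zp p - Zp_digits_below p k) (Suc m) = card ?T"
    unfolding string_count_def maximal_balls_complement_Zp_digits_below[OF assms(1,2)]
    by (rule card_image)
  also have "\<dots> = nat (int k) ^ m * nat (int p - int k)"
    using assms by (intro card_digits_below_exit) auto
  also have "\<dots> = k ^ m * (p - k)"
    using assms by (simp add: nat_diff_distrib)
  finally show ?thesis .
qed

section \<open>The geometric zeta function\<close>

lemma exp_mult_of_real_eq_iff:
  fixes L k :: real
  assumes "L > 0" "k > 0"
  shows "exp (z * of_real L) = of_real k \<longleftrightarrow>
    (\<exists>n::int. z = of_real (ln k / L) + 2 * pi * \<i> * of_int n / of_real L)"
proof -
  have "(of_real k :: complex) = exp (of_real (ln k))"
    using assms(2) by (simp add: exp_of_real)
  then have "exp (z * of_real L) = of_real k \<longleftrightarrow>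
      (\<exists>n::int. z * of_real L = of_real (ln k) + (of_int (2 * n) * pi) * \<i>)"
    by (simp only: exp_eq)
  also have "\<dots> \<longleftrightarrow> (\<exists>n::int. z = of_real (ln k / L) + 2 * pi * \<i> * of_int n / of_real L)"
    using assms(1) by (simp add: field_simps)
  finally show ?thesis .
qed

lemma is_pole_div_exp_minus_iff:
  fixes L k :: real and c :: complex
  assumes "c \<noteq> 0" "L > 0" "k > 0"
  shows "is_pole (\<lambda>z. c / (exp (z * of_real L) - of_real k)) z \<longleftrightarrow> exp (z * of_real L) = of_real k"
proof -
  define g where "g = (\<lambda>z::complex. exp (z * of_real L) - of_real k)"
  have g_analytic: "g analytic_on S" for S
    unfolding g_def by (intro analytic_intros)
  have "g (\<i> * of_real (pi / L)) = - 1 - of_real k"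
    using assms(2) by (simp add: g_def field_simps)
  then have "g (\<i> * of_real (pi / L)) \<noteq> 0"
    using assms(3) by (simp add: complex_eq_iff)
  then have isolated: "eventually (\<lambda>w. g w \<noteq> 0) (at z)"
    using non_zero_neighbour_alt[OF analytic_imp_holomorphic[OF g_analytic], of UNIV z "\<i> * of_real (pi / L)"]
    by (auto elim: eventually_mono)
  have "is_pole (\<lambda>z. c / g z) z \<longleftrightarrow> is_pole (\<lambda>z. inverse (g z)) z"
    using assms(1) by (simp add: divide_inverse)
  also have "\<dots> \<longleftrightarrow> g z = 0"
    unfolding is_pole_inverse_iff
    using isolated_zero_analytic_iff[OF g_analytic] isolated by simp
  finally show ?thesis
    by (simp add: g_def)
qed

lemma meromorphic_on_div_exp_minus:
  fixes L k :: real and c :: complex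
  shows "(\<lambda>z. c / (exp (z * of_real L) - of_real k)) meromorphic_on UNIV"
  by (intro meromorphic_intros analytic_on_imp_meromorphic_on analytic_intros)

lemma poles_div_exp_minus:
  fixes L k :: real and c :: complex
  assumes "c \<noteq> 0" "L > 0" "k > 0"
  shows "{z. is_pole (\<lambda>z. c / (exp (z * of_real L) - of_real k)) z}
    = {of_real (ln k / L) + 2 * pi * \<i> * of_int n / of_real L | n. True}"
  using is_pole_div_exp_minus_iff[OF assms] exp_mult_of_real_eq_iff[OF assms(2,3)] by blast

lemma of_real_inverse_power_powr:
  assumes "x > 0"
  shows "complex_of_real (1 / x ^ n) powr s = exp (- s * of_real (ln x)) ^ n"
proof -
  have "Ln (complex_of_real (1 / x ^ n)) = of_real (ln (1 / x ^ n))"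
    using assms by (intro Ln_of_real) simp
  then have "complex_of_real (1 / x ^ n) powr s = exp (s * of_real (ln (1 / x ^ n)))"
    unfolding powr_def using assms by simp
  also have "\<dots> = exp (of_nat n * (- s * of_real (ln x)))"
    using assms by (simp add: ln_div ln_realpow algebra_simps)
  also have "\<dots> = exp (- s * of_real (ln x)) ^ n"
    by (rule exp_of_nat_mult)
  finally show ?thesis .
qed

locale geometric_string_counts =
  fixes p k :: nat and L :: "(nat \<Rightarrow> int) set"
  assumes p_gt_1: "p > 1" and k_pos: "k > 0" and k_less_p: "k < p"
    and string_count_Suc: "string_count p L (Suc m) = k ^ m * (p - k)"
begin

lemma geom_zeta_term_0: "geom_zeta_term p L s 0 = 0"
  by (simp add: geom_zeta_term_def)

lemma geom_zeta_term_Suc: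
  "geom_zeta_term p L s (Suc m) =
     of_nat (p - k) * exp (- s * of_real (ln p)) * (of_nat k * exp (- s * of_real (ln p))) ^ m"
proof -
  have "real p > 0"
    using p_gt_1 by simp
  then show ?thesis
    unfolding geom_zeta_term_def string_count_Suc of_real_inverse_power_powr[OF \<open>real p > 0\<close>]
    by (simp add: power_mult_distrib mult_ac)
qed

lemma norm_geom_zeta_ratio_less_1_iff:
  "norm (of_nat k * exp (- s * of_real (ln p))) < 1 \<longleftrightarrow> ln k / ln p < Re s"
proof -
  have "norm (of_nat k * exp (- s * of_real (ln p))) = real k * exp (- Re s * ln p)"
    by (simp add: norm_mult)
  also have "\<dots> = exp (ln k - Re s * ln p)"
    using k_pos by (simp add: exp_diff exp_minus field_simps)
  also have "\<dots> < 1 \<longleftrightarrow> ln k / ln p < Re s"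
    using p_gt_1 by (simp add: divide_less_eq)
  finally show ?thesis .
qed

lemma summable_norm_geom_zeta_term_iff:
  "summable (\<lambda>n. norm (geom_zeta_term p L s n)) \<longleftrightarrow> ln k / ln p < Re s"
proof -
  let ?a = "norm (of_nat (p - k) * exp (- s * of_real (ln p)))"
  let ?r = "norm (of_nat k * exp (- s * of_real (ln p)))"
  have "summable (\<lambda>n. norm (geom_zeta_term p L s n)) \<longleftrightarrow> summable (\<lambda>m. ?a * ?r ^ m)"
    unfolding summable_Suc_iff[symmetric, of "\<lambda>n. norm (geom_zeta_term p L s n)"] geom_zeta_term_Suc
    by (simp add: norm_mult norm_power)
  also have "\<dots> \<longleftrightarrow> ?r < 1"
    using k_less_p by simp
  finally show ?thesis
    unfolding norm_geom_zeta_ratio_less_1_iff .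
qed

lemma geom_zeta_term_sums:
  assumes "ln k / ln p < Re s"
  shows "geom_zeta_term p L s sums (of_nat (p - k) / (exp (s * of_real (ln p)) - of_real k))"
proof -
  define w where "w = exp (- s * of_real (ln p))"
  have "norm (of_nat k * w) < 1"
    using assms norm_geom_zeta_ratio_less_1_iff by (simp add: w_def)
  then have "(\<lambda>m. geom_zeta_term p L s (Suc m)) sums (of_nat (p - k) * w * (1 / (1 - of_nat k * w)))"
    unfolding geom_zeta_term_Suc w_def[symmetric] by (intro sums_mult geometric_sums)
  then have "geom_zeta_term p L s sums (of_nat (p - k) * w * (1 / (1 - of_nat k * w)))"
    using sums_Suc_iff[of "geom_zeta_term p L s"] by (simp add: geom_zeta_term_0)
  moreover have "of_nat (p - k) * w * (1 / (1 - of_nat k * w))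
      = of_nat (p - k) / (exp (s * of_real (ln p)) - of_real k)"
  proof -
    define E where "E = exp (s * of_real (ln p))"
    have "E \<noteq> 0" and w: "w = 1 / E"
      by (simp_all add: E_def w_def exp_minus divide_inverse)
    have "E - of_nat k \<noteq> 0"
      using \<open>norm (of_nat k * w) < 1\<close> \<open>E \<noteq> 0\<close> by (auto simp: w)
    with \<open>E \<noteq> 0\<close> show ?thesis
      unfolding w E_def[symmetric] by (simp add: field_simps)
  qed
  ultimately show ?thesis
    by simp
qed

end

theorem theorem4p3:
  fixes p :: nat
  assumes "prime p" and "p > 2"
  shows "\<exists>L. self_similar_padic_string p L \<and>
           (let D = ln ((1 + real p) / 2) / ln (real p) in
             (\<forall>\<sigma>::real. \<sigma> > D \<longrightarrow> summable (\<lambda>n. norm (geom_zeta_term p L (of_real \<sigma>) n))) \<and>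
             (\<forall>\<sigma>::real. \<sigma> < D \<longrightarrow> \<not> summable (\<lambda>n. norm (geom_zeta_term p L (of_real \<sigma>) n))) \<and>
             (\<exists>f. f meromorphic_on UNIV \<and>
                  (\<forall>s. Re s > D \<longrightarrow> geom_zeta_term p L s sums f s) \<and>
                  {z. is_pole f z} = {complex_of_real D + 2 * pi * \<i> * of_int k / complex_of_real (ln (real p)) | k. True}))"
proof -
  define k where "k = (p + 1) div 2"
  have "odd p"
    using assms prime_odd_nat by blast
  then have "2 * k = p + 1"
    unfolding k_def by presburger
  then have "p > 1" "2 \<le> k" "k < p"
    using assms(2) by linarith+
  have k: "(1 + real p) / 2 = real k"
    using \<open>2 * k = p + 1\<close> by (simp add: field_simps flip: of_nat_mult of_nat_Suc)
  define L where "L = Zp p - Zp_digits_below p k"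
  interpret geometric_string_counts p k L
    using \<open>p > 1\<close> \<open>2 \<le> k\<close> \<open>k < p\<close> string_count_complement_Zp_digits_below
    by unfold_locales (simp_all add: L_def)
  define f where "f = (\<lambda>s. of_nat (p - k) / (exp (s * complex_of_real (ln p)) - complex_of_real k))"
  have "f meromorphic_on UNIV"
    unfolding f_def by (rule meromorphic_on_div_exp_minus)
  moreover have "{z. is_pole f z} =
      {complex_of_real (ln k / ln p) + 2 * pi * \<i> * of_int n / complex_of_real (ln p) | n. True}"
    unfolding f_def using \<open>p > 1\<close> \<open>k < p\<close> \<open>2 \<le> k\<close> by (intro poles_div_exp_minus) auto
  ultimately show ?thesis
    unfolding Let_def k
    using self_similar_padic_string_Zp_digits_below[OF \<open>p > 1\<close> \<open>2 \<le> k\<close> less_imp_le[OF \<open>k < p\<close>]]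
      summable_norm_geom_zeta_term_iff geom_zeta_term_sums
    by (intro exI[of _ L] conjI allI impI exI[of _ f]) (auto simp: L_def f_def)
qed

end
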